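(* Let $K\subseteq[0,1]^n$ be compact and $\epsilon>0$. If $t\ge \log(8n)/(2\epsilon^2)$, then for every $p\in K$ and every measurable set $A\subseteq[0,1]^n$, $$\mathbb{P}_p[Y_{t,\epsilon}\in A]\le 2\,\mathbb{P}_p[\bar X_t\in A].$$
   Context: For $p\in[0,1]^n$, let $X_1,X_2,\dots$ be i.i.d. random vectors in $\{0,1\}^n$ whose coordinates $X_{s,i}$ are independent Bernoulli($p_i$) variables, and $\bar X_t=(X_1+\dots+X_t)/t$; $\mathbb{P}_p$ denotes probability under this law. For $K\subseteq\mathbb{R}^n$, $\mathcal{B}_\infty(K,\epsilon)=\{x\in\mathbb{R}^n:\exists q\in K,\ \|x-q\|_\infty<\epsilon\}$. $Y_{t,\epsilon}$ is a random variable with the conditional law of $\bar X_t$ given $\bar X_t\in\mathcal{B}_\infty(K,\epsilon)$, i.e. $\mathbb{P}_p[Y_{t,\epsilon}\in A]=\mathbb{P}_p[\bar X_t\in A\mid \bar X_t\in\mathcal{B}_\infty(K,\epsilon)]$. *)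

theory Defs
  imports "HOL-Analysis.Analysis" "HOL-Probability.Probability"
begin

definition sample_pmf :: "real^'n \<Rightarrow> (real^'n) pmf" where
  "sample_pmf p =
     map_pmf (\<lambda>b. \<chi> i. if b i then 1 else 0)
       (Pi_pmf UNIV False (\<lambda>i. bernoulli_pmf (p $ i)))"

definition mean_pmf :: "real^'n \<Rightarrow> nat \<Rightarrow> (real^'n) pmf" where
  "mean_pmf p t =
     map_pmf (\<lambda>xs. (1 / real t) *\<^sub>R (\<Sum>s<t. xs s))
       (Pi_pmf {..<t} 0 (\<lambda>_. sample_pmf p))"

definition linf_dist :: "real^'n \<Rightarrow> real^'n \<Rightarrow> real" where
  "linf_dist x q = Max (range (\<lambda>i. \<bar>x $ i - q $ i\<bar>))"

definition B_inf :: "(real^'n) set \<Rightarrow> real \<Rightarrow> (real^'n) set" where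
  "B_inf K \<epsilon> = {x. \<exists>q\<in>K. linf_dist x q < \<epsilon>}"

definition unit_cube :: "(real^'n) set" where
  "unit_cube = {x. \<forall>i. 0 \<le> x $ i \<and> x $ i \<le> 1}"

text \<open>P_p[Y_{t,eps} \<in> A] = P_p[Xbar_t \<in> A | Xbar_t \<in> B_inf K eps].\<close>
definition Y_prob :: "(real^'n) set \<Rightarrow> real \<Rightarrow> real^'n \<Rightarrow> nat \<Rightarrow> (real^'n) set \<Rightarrow> real" where
  "Y_prob K \<epsilon> p t A =
     measure_pmf.prob (mean_pmf p t) (A \<inter> B_inf K \<epsilon>) / measure_pmf.prob (mean_pmf p t) (B_inf K \<epsilon>)"

end

theory Submission
  imports Defs
begin

text \<open>
  By Hoeffding's inequality each coordinate of the empirical mean \<open>X\<^sub>t\<close>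
  deviates from \<open>p\<^sub>i\<close> by at least \<open>\<epsilon>\<close> with probability
  at most \<open>2 exp(-2t\<epsilon>\<^sup>2) \<le> 1/(4n)\<close>. As \<open>p \<in> K\<close>,
  a union bound over the \<open>n\<close> coordinates shows that \<open>X\<^sub>t\<close> lies in
  the \<open>\<epsilon>\<close>-neighbourhood of \<open>K\<close> with probability at least
  \<open>3/4\<close>, and conditioning on an event of probability at least \<open>1/2\<close> at
  most doubles the probability of any event.
\<close>

lemma sample_pmf_component:
  "map_pmf (\<lambda>v. v $ i) (sample_pmf p) = map_pmf (\<lambda>b. if b then 1 else 0) (bernoulli_pmf (p $ i))"
proof -
  have "map_pmf (\<lambda>v. v $ i) (sample_pmf p) =
        map_pmf (\<lambda>b. if b then 1 else 0) (map_pmf (\<lambda>f. f i) (Pi_pmf UNIV False (\<lambda>i. bernoulli_pmf (p $ i))))"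
    unfolding sample_pmf_def by (simp add: pmf.map_comp o_def)
  also have "map_pmf (\<lambda>f. f i) (Pi_pmf UNIV False (\<lambda>i. bernoulli_pmf (p $ i))) = bernoulli_pmf (p $ i)"
    by (subst Pi_pmf_component) auto
  finally show ?thesis .
qed

lemma mean_pmf_component:
  assumes "0 \<le> p $ i" "p $ i \<le> 1"
  shows "map_pmf (\<lambda>x. x $ i) (mean_pmf p t) = map_pmf (\<lambda>k. real k / real t) (binomial_pmf t (p $ i))"
proof -
  let ?ind = "\<lambda>b. if b then 1 else (0::real)"
  let ?coins = "Pi_pmf {..<t} False (\<lambda>_. bernoulli_pmf (p $ i))"
  have "map_pmf (\<lambda>x. x $ i) (mean_pmf p t) =
        map_pmf (\<lambda>ys. (1 / real t) * (\<Sum>s<t. ys s))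
          (map_pmf (\<lambda>xs. (\<lambda>v. v $ i) \<circ> xs) (Pi_pmf {..<t} 0 (\<lambda>_. sample_pmf p)))"
    unfolding mean_pmf_def by (simp add: pmf.map_comp o_def sum_component)
  also have "map_pmf (\<lambda>xs. (\<lambda>v. v $ i) \<circ> xs) (Pi_pmf {..<t} 0 (\<lambda>_. sample_pmf p))
      = Pi_pmf {..<t} 0 (\<lambda>_. map_pmf (\<lambda>v. v $ i) (sample_pmf p))"
    by (rule Pi_pmf_map[symmetric]) auto
  also have "\<dots> = Pi_pmf {..<t} 0 (\<lambda>_. map_pmf ?ind (bernoulli_pmf (p $ i)))"
    by (simp add: sample_pmf_component)
  also have "\<dots> = map_pmf (\<lambda>h. ?ind \<circ> h) ?coins"
    by (rule Pi_pmf_map) auto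
  finally have mean_as_coins: "map_pmf (\<lambda>x. x $ i) (mean_pmf p t) =
      map_pmf (\<lambda>h. (1 / real t) * (\<Sum>s<t. ?ind (h s))) ?coins"
    by (simp add: pmf.map_comp o_def)
  have sum_ind_eq_card: "(\<Sum>s<t. ?ind (h s)) = real (card {s\<in>{..<t}. h s})" for h
  proof -
    have "(\<Sum>s<t. ?ind (h s)) = (\<Sum>s\<in>{s\<in>{..<t}. h s}. 1)"
      by (intro sum.mono_neutral_cong_right) auto
    then show ?thesis by simp
  qed
  have "binomial_pmf t (p $ i) = map_pmf (\<lambda>h. card {s\<in>{..<t}. h s}) ?coins"
    by (rule binomial_pmf_altdef') (use assms in auto)
  then show ?thesis
    unfolding mean_as_coins by (simp add: pmf.map_comp o_def sum_ind_eq_card)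
qed

lemma mean_pmf_component_deviation_prob_le:
  assumes "0 \<le> p $ i" "p $ i \<le> 1" "\<epsilon> \<ge> 0"
  shows "measure_pmf.prob (mean_pmf p t) {x. \<epsilon> \<le> \<bar>x $ i - p $ i\<bar>} \<le> 2 * exp (- 2 * real t * \<epsilon>\<^sup>2)"
proof (cases "t = 0")
  case True
  have "measure_pmf.prob (mean_pmf p t) {x. \<epsilon> \<le> \<bar>x $ i - p $ i\<bar>} \<le> 1"
    by (rule measure_pmf.prob_le_1)
  moreover have "2 * exp (- 2 * real t * \<epsilon>\<^sup>2) = 2"
    using True by simp
  ultimately show ?thesis by linarith
next
  case False
  have "measure_pmf.prob (mean_pmf p t) {x. \<epsilon> \<le> \<bar>x $ i - p $ i\<bar>}
      = measure_pmf.prob (map_pmf (\<lambda>x. x $ i) (mean_pmf p t)) {y. \<epsilon> \<le> \<bar>y - p $ i\<bar>}"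
    by (simp add: measure_map_pmf vimage_def)
  also have "\<dots> = measure_pmf.prob (binomial_pmf t (p $ i)) {k. \<epsilon> \<le> \<bar>real k / real t - p $ i\<bar>}"
    by (simp add: mean_pmf_component[OF assms(1,2)] measure_map_pmf vimage_def)
  also have "\<dots> \<le> 2 * exp (real_of_int (- 2 * int t) * \<epsilon>\<^sup>2)"
    by (rule binomial_distribution.prob_abs_ge')
       (use assms False in \<open>auto simp: binomial_distribution_def\<close>)
  finally show ?thesis by simp
qed

lemma compl_B_inf_subset_component_deviation:
  assumes "q \<in> K"
  shows "- B_inf K \<epsilon> \<subseteq> (\<Union>i. {x. \<epsilon> \<le> \<bar>x $ i - q $ i\<bar>})"
proof
  fix x assume "x \<in> - B_inf K \<epsilon>"
  then have "\<not> linf_dist x q < \<epsilon>"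
    using assms unfolding B_inf_def by auto
  moreover have "linf_dist x q \<in> range (\<lambda>i. \<bar>x $ i - q $ i\<bar>)"
    unfolding linf_dist_def by (rule Max_in) auto
  ultimately show "x \<in> (\<Union>i. {x. \<epsilon> \<le> \<bar>x $ i - q $ i\<bar>})"
    by (auto simp: not_less)
qed

lemma mean_pmf_compl_B_inf_prob_le:
  fixes p :: "real^'n"
  assumes "p \<in> K" "p \<in> unit_cube" "\<epsilon> \<ge> 0"
  shows "measure_pmf.prob (mean_pmf p t) (- B_inf K \<epsilon>) \<le> 2 * CARD('n) * exp (- 2 * real t * \<epsilon>\<^sup>2)"
proof -
  let ?M = "mean_pmf p t"
  have "measure_pmf.prob ?M (- B_inf K \<epsilon>) \<le> measure_pmf.prob ?M (\<Union>i. {x. \<epsilon> \<le> \<bar>x $ i - p $ i\<bar>})"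
    using compl_B_inf_subset_component_deviation[OF assms(1)]
    by (intro measure_pmf.finite_measure_mono) auto
  also have "\<dots> \<le> (\<Sum>i\<in>UNIV. measure_pmf.prob ?M {x. \<epsilon> \<le> \<bar>x $ i - p $ i\<bar>})"
    by (intro measure_pmf.finite_measure_subadditive_finite) auto
  also have "\<dots> \<le> (\<Sum>i\<in>(UNIV::'n set). 2 * exp (- 2 * real t * \<epsilon>\<^sup>2))"
    using assms(2,3) unfolding unit_cube_def
    by (intro sum_mono mean_pmf_component_deviation_prob_le) auto
  finally show ?thesis by simp
qed

lemma (in prob_space) prob_Int_div_le_twice:
  assumes "A \<in> events" "B \<in> events" "prob B \<ge> 1/2"
  shows "prob (A \<inter> B) / prob B \<le> 2 * prob A"
proof -
  have "prob (A \<inter> B) / prob B \<le> prob A / prob B"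
    using assms by (intro divide_right_mono finite_measure_mono) auto
  also have "\<dots> \<le> prob A / (1/2)"
    using assms(3) by (intro divide_left_mono) auto
  finally show ?thesis by simp
qed

theorem lemma7:
  fixes K :: "(real^'n) set" and \<epsilon> :: real and t :: nat
  assumes "compact K" and "K \<subseteq> unit_cube" and "\<epsilon> > 0"
    and "real t \<ge> ln (8 * real CARD('n)) / (2 * \<epsilon>^2)"
  shows "\<forall>p\<in>K. \<forall>A. A \<in> sets borel \<and> A \<subseteq> unit_cube \<longrightarrow>
           Y_prob K \<epsilon> p t A \<le> 2 * measure_pmf.prob (mean_pmf p t) A"
proof (intro ballI allI impI)
  fix p A assume "p \<in> K"
  let ?n = "real CARD('n)"
  have "ln (8 * ?n) \<le> 2 * real t * \<epsilon>\<^sup>2"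
    using assms(3,4) by (simp add: field_simps)
  then have "exp (- 2 * real t * \<epsilon>\<^sup>2) \<le> exp (- ln (8 * ?n))"
    by simp
  also have "\<dots> = 1 / (8 * ?n)"
    by (simp add: exp_minus inverse_eq_divide)
  finally have "measure_pmf.prob (mean_pmf p t) (- B_inf K \<epsilon>) \<le> 1/4"
    using mean_pmf_compl_B_inf_prob_le[of p K \<epsilon> t] \<open>p \<in> K\<close> assms(2,3)
    by (auto simp: field_simps)
  then have "measure_pmf.prob (mean_pmf p t) (B_inf K \<epsilon>) \<ge> 1/2"
    using measure_pmf.prob_compl[of "B_inf K \<epsilon>" "mean_pmf p t"] by (simp add: Compl_eq_Diff_UNIV)
  then show "Y_prob K \<epsilon> p t A \<le> 2 * measure_pmf.prob (mean_pmf p t) A"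
    unfolding Y_prob_def by (intro measure_pmf.prob_Int_div_le_twice) auto
qed

end
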